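(* Consider a finite discounted MDP with $A$ actions, rewards in $[0,1]$, discount $\gamma\in[0,1)$ and initial distribution $\rho$. For $\tau>0$ let $\tilde V^\pi_\tau(\rho):=V^\pi(\rho)+\tau\mathbb{H}(\pi)$ and $\tilde V^*_\tau(\rho):=\max_\pi\tilde V^\pi_\tau(\rho)$. For a fixed softmax policy $\pi_\theta$ and $0<\tau_2<\tau_1$, $$\tilde V^*_{\tau_2}(\rho)-\tilde V^{\pi_\theta}_{\tau_2}(\rho)\le\tilde V^*_{\tau_1}(\rho)-\tilde V^{\pi_\theta}_{\tau_1}(\rho)+\frac{2\tau_1\log A}{1-\gamma}.$$
   Context: $V^\pi(\rho)=\mathbb{E}_{s_0\sim\rho}\mathbb{E}^\pi[\sum_{t\ge0}\gamma^tr(s_t,a_t)]$ and $\mathbb{H}(\pi):=\mathbb{E}_{s_0\sim\rho,a_t\sim\pi(\cdot|s_t),s_{t+1}\sim\mathcal{P}(\cdot|s_t,a_t)}[\sum_{t\ge0}-\gamma^t\log\pi(a_t\mid s_t)]$ (discounted entropy). *)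

theory Defs
  imports "HOL-Analysis.Analysis"
begin

text \<open>Transition kernel P s a s', reward r s a, initial distribution \<rho>.
  Stationary stochastic policies \<pi> s a = \<pi>(a|s).\<close>

definition is_dist :: "('b::finite \<Rightarrow> real) \<Rightarrow> bool" where
  "is_dist p \<longleftrightarrow> (\<forall>x. 0 \<le> p x) \<and> (\<Sum>x\<in>UNIV. p x) = 1"

definition is_policy :: "('s::finite \<Rightarrow> 'a::finite \<Rightarrow> real) \<Rightarrow> bool" where
  "is_policy \<pi> \<longleftrightarrow> (\<forall>s. is_dist (\<pi> s))"

definition is_kernel :: "('s::finite \<Rightarrow> 'a::finite \<Rightarrow> 's \<Rightarrow> real) \<Rightarrow> bool" where
  "is_kernel P \<longleftrightarrow> (\<forall>s a. is_dist (P s a))"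

primrec state_dist ::
  "('s::finite \<Rightarrow> 'a::finite \<Rightarrow> 's \<Rightarrow> real) \<Rightarrow> ('s \<Rightarrow> 'a \<Rightarrow> real) \<Rightarrow> ('s \<Rightarrow> real) \<Rightarrow> nat \<Rightarrow> 's \<Rightarrow> real" where
  "state_dist P \<pi> \<rho> 0 = \<rho>"
| "state_dist P \<pi> \<rho> (Suc t) =
     (\<lambda>s'. \<Sum>s\<in>UNIV. state_dist P \<pi> \<rho> t s * (\<Sum>a\<in>UNIV. \<pi> s a * P s a s'))"

definition value_fn ::
  "('s::finite \<Rightarrow> 'a::finite \<Rightarrow> 's \<Rightarrow> real) \<Rightarrow> ('s \<Rightarrow> 'a \<Rightarrow> real) \<Rightarrow> real \<Rightarrow> ('s \<Rightarrow> 'a \<Rightarrow> real) \<Rightarrow> ('s \<Rightarrow> real) \<Rightarrow> real" where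
  "value_fn P r \<gamma> \<pi> \<rho> =
     (\<Sum>t. \<gamma> ^ t * (\<Sum>s\<in>UNIV. state_dist P \<pi> \<rho> t s * (\<Sum>a\<in>UNIV. \<pi> s a * r s a)))"

text \<open>Discounted entropy H(\<pi>) = E[\<Sum>_t -\<gamma>^t log \<pi>(a_t|s_t)] (with 0 log 0 = 0, as ln 0 = 0).\<close>
definition disc_entropy ::
  "('s::finite \<Rightarrow> 'a::finite \<Rightarrow> 's \<Rightarrow> real) \<Rightarrow> real \<Rightarrow> ('s \<Rightarrow> 'a \<Rightarrow> real) \<Rightarrow> ('s \<Rightarrow> real) \<Rightarrow> real" where
  "disc_entropy P \<gamma> \<pi> \<rho> =
     (\<Sum>t. \<gamma> ^ t * (\<Sum>s\<in>UNIV. state_dist P \<pi> \<rho> t s * (\<Sum>a\<in>UNIV. - (\<pi> s a * ln (\<pi> s a)))))"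

definition reg_value ::
  "('s::finite \<Rightarrow> 'a::finite \<Rightarrow> 's \<Rightarrow> real) \<Rightarrow> ('s \<Rightarrow> 'a \<Rightarrow> real) \<Rightarrow> real \<Rightarrow> real \<Rightarrow> ('s \<Rightarrow> 'a \<Rightarrow> real) \<Rightarrow> ('s \<Rightarrow> real) \<Rightarrow> real" where
  "reg_value P r \<gamma> \<tau> \<pi> \<rho> = value_fn P r \<gamma> \<pi> \<rho> + \<tau> * disc_entropy P \<gamma> \<pi> \<rho>"

definition opt_reg_value ::
  "('s::finite \<Rightarrow> 'a::finite \<Rightarrow> 's \<Rightarrow> real) \<Rightarrow> ('s \<Rightarrow> 'a \<Rightarrow> real) \<Rightarrow> real \<Rightarrow> real \<Rightarrow> ('s \<Rightarrow> real) \<Rightarrow> real" where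
  "opt_reg_value P r \<gamma> \<tau> \<rho> = (SUP \<pi>\<in>{\<pi>. is_policy \<pi>}. reg_value P r \<gamma> \<tau> \<pi> \<rho>)"

definition softmax :: "('s \<Rightarrow> 'a::finite \<Rightarrow> real) \<Rightarrow> 's \<Rightarrow> 'a \<Rightarrow> real" where
  "softmax \<theta> s a = exp (\<theta> s a) / (\<Sum>a'\<in>UNIV. exp (\<theta> s a'))"

end

theory Submission
  imports Defs
begin

(* The discounted entropy is nonnegative, so the optimal regularized value is monotone in the
   temperature. For a fixed policy the regularized values at two temperatures differ by
   (tau1 - tau2) H(pi), and H(pi) <= log A / (1 - gamma) since the entropy of a distribution
   on A actions is at most log A (Gibbs). Hence the bound holds for every policy, with
   (tau1 - tau2) in place of the factor 2 tau1. *)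

lemma is_dist_sum_mult_bounds:
  fixes d :: "'s::finite \<Rightarrow> real"
  assumes "is_dist d" and "\<And>s. 0 \<le> g s \<and> g s \<le> B"
  shows "0 \<le> (\<Sum>s\<in>UNIV. d s * g s) \<and> (\<Sum>s\<in>UNIV. d s * g s) \<le> B"
proof
  show "0 \<le> (\<Sum>s\<in>UNIV. d s * g s)"
    using assms by (intro sum_nonneg) (simp add: is_dist_def)
  have "(\<Sum>s\<in>UNIV. d s * g s) \<le> (\<Sum>s\<in>UNIV. d s * B)"
    using assms by (intro sum_mono mult_left_mono) (auto simp: is_dist_def)
  also have "\<dots> = B"
    using assms by (simp add: is_dist_def flip: sum_distrib_right)
  finally show "(\<Sum>s\<in>UNIV. d s * g s) \<le> B" .
qed

lemma is_dist_state_dist: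
  assumes "is_kernel P" and "is_policy \<pi>" and "is_dist \<rho>"
  shows "is_dist (state_dist P \<pi> \<rho> t)"
proof (induction t)
  case 0
  then show ?case using assms by simp
next
  case (Suc t)
  let ?d = "state_dist P \<pi> \<rho> t"
  have nonneg: "0 \<le> ?d s" "0 \<le> \<pi> s a" "0 \<le> P s a s'" for s a s'
    using Suc assms by (auto simp: is_dist_def is_policy_def is_kernel_def)
  have "(\<Sum>s'\<in>UNIV. \<Sum>s\<in>UNIV. ?d s * (\<Sum>a\<in>UNIV. \<pi> s a * P s a s'))
      = (\<Sum>s\<in>UNIV. ?d s * (\<Sum>a\<in>UNIV. \<pi> s a * (\<Sum>s'\<in>UNIV. P s a s')))"
    by (simp add: sum_distrib_left sum_distrib_right mult.assoc)
       (subst sum.swap, rule sum.cong, simp, subst sum.swap, simp)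
  also have "\<dots> = (\<Sum>s\<in>UNIV. ?d s)"
    using assms by (simp add: is_kernel_def is_dist_def is_policy_def)
  also have "\<dots> = 1"
    using Suc by (simp add: is_dist_def)
  finally show ?case
    using nonneg by (auto simp: is_dist_def intro!: sum_nonneg mult_nonneg_nonneg)
qed

lemma geometric_weighted_suminf_bounds:
  fixes f :: "nat \<Rightarrow> real"
  assumes "0 \<le> \<gamma>" and "\<gamma> < 1" and "\<And>t. 0 \<le> f t \<and> f t \<le> B"
  shows "0 \<le> (\<Sum>t. \<gamma> ^ t * f t) \<and> (\<Sum>t. \<gamma> ^ t * f t) \<le> B / (1 - \<gamma>)"
proof -
  have geometric: "summable (\<lambda>t. B * \<gamma> ^ t)"
    using assms by (intro summable_mult summable_geometric) auto
  have dominated: "0 \<le> \<gamma> ^ t * f t \<and> \<gamma> ^ t * f t \<le> B * \<gamma> ^ t" for t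
    using assms(1) assms(3)[of t] by (simp add: mult.commute mult_right_mono)
  have summable: "summable (\<lambda>t. \<gamma> ^ t * f t)"
    using dominated by (intro summable_comparison_test[OF _ geometric]) auto
  have "(\<Sum>t. \<gamma> ^ t * f t) \<le> (\<Sum>t. B * \<gamma> ^ t)"
    using dominated by (intro suminf_le summable geometric) auto
  also have "\<dots> = B / (1 - \<gamma>)"
    using assms by (simp add: suminf_mult suminf_geometric)
  finally show ?thesis
    using dominated summable by (simp add: suminf_nonneg)
qed

lemma discounted_state_sum_bounds:
  assumes "is_kernel P" and "is_policy \<pi>" and "is_dist \<rho>" and "0 \<le> \<gamma>" and "\<gamma> < 1"
    and "\<And>s. 0 \<le> f s \<and> f s \<le> B"
  shows "0 \<le> (\<Sum>t. \<gamma> ^ t * (\<Sum>s\<in>UNIV. state_dist P \<pi> \<rho> t s * f s))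
    \<and> (\<Sum>t. \<gamma> ^ t * (\<Sum>s\<in>UNIV. state_dist P \<pi> \<rho> t s * f s)) \<le> B / (1 - \<gamma>)"
  using assms
  by (intro geometric_weighted_suminf_bounds is_dist_sum_mult_bounds is_dist_state_dist)

lemma neg_mult_ln_bounds:
  fixes p n :: real
  assumes "0 \<le> p" and "p \<le> 1" and "1 \<le> n"
  shows "0 \<le> - (p * ln p) \<and> - (p * ln p) \<le> p * ln n + 1 / n - p"
proof (cases "p = 0")
  case True
  then show ?thesis using assms by simp
next
  case False
  then have "0 < p" using assms by simp
  have "0 \<le> - (p * ln p)"
    using \<open>0 < p\<close> assms by (simp add: mult_nonneg_nonpos)
  moreover have "p * ln (1 / (n * p)) \<le> p * (1 / (n * p) - 1)"
    using \<open>0 < p\<close> assms by (intro mult_left_mono ln_le_minus_one) auto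
  moreover have "ln (1 / (n * p)) = - ln n - ln p"
    using \<open>0 < p\<close> assms by (simp add: ln_div ln_mult)
  moreover have "p * (1 / (n * p) - 1) = 1 / n - p"
    using \<open>0 < p\<close> assms by (simp add: field_simps)
  ultimately show ?thesis by (simp add: algebra_simps)
qed

lemma entropy_bounds:
  fixes p :: "'a::finite \<Rightarrow> real"
  assumes "is_dist p"
  shows "0 \<le> (\<Sum>a\<in>UNIV. - (p a * ln (p a)))
    \<and> (\<Sum>a\<in>UNIV. - (p a * ln (p a))) \<le> ln (real CARD('a))"
proof
  let ?n = "real CARD('a)"
  have prob: "0 \<le> p a \<and> p a \<le> 1" for a
  proof -
    have "p a \<le> (\<Sum>b\<in>UNIV. p b)"
      using assms by (intro member_le_sum) (auto simp: is_dist_def)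
    then show ?thesis using assms by (simp add: is_dist_def)
  qed
  have term_bounds: "0 \<le> - (p a * ln (p a)) \<and> - (p a * ln (p a)) \<le> p a * ln ?n + 1 / ?n - p a"
    for a
    using prob by (intro neg_mult_ln_bounds) auto
  then show "0 \<le> (\<Sum>a\<in>UNIV. - (p a * ln (p a)))"
    by (intro sum_nonneg) blast
  have "(\<Sum>a\<in>UNIV. - (p a * ln (p a))) \<le> (\<Sum>a\<in>UNIV. p a * ln ?n + 1 / ?n - p a)"
    using term_bounds by (intro sum_mono) blast
  also have "\<dots> = ln ?n"
    using assms by (simp add: sum_subtractf sum.distrib is_dist_def flip: sum_distrib_right)
  finally show "(\<Sum>a\<in>UNIV. - (p a * ln (p a))) \<le> ln ?n" .
qed

lemma value_fn_le:
  assumes "is_kernel P" and "is_policy \<pi>" and "is_dist \<rho>" and "0 \<le> \<gamma>" and "\<gamma> < 1"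
    and "\<And>s a. 0 \<le> r s a \<and> r s a \<le> 1"
  shows "value_fn P r \<gamma> \<pi> \<rho> \<le> 1 / (1 - \<gamma>)"
proof -
  have per_state: "0 \<le> (\<Sum>a\<in>UNIV. \<pi> s a * r s a) \<and> (\<Sum>a\<in>UNIV. \<pi> s a * r s a) \<le> 1" for s
    using assms by (intro is_dist_sum_mult_bounds) (auto simp: is_policy_def)
  show ?thesis
    using discounted_state_sum_bounds[OF assms(1-5) per_state] unfolding value_fn_def by simp
qed

lemma disc_entropy_bounds:
  fixes P :: "'s::finite \<Rightarrow> 'a::finite \<Rightarrow> 's \<Rightarrow> real"
  assumes "is_kernel P" and "is_policy \<pi>" and "is_dist \<rho>" and "0 \<le> \<gamma>" and "\<gamma> < 1"
  shows "0 \<le> disc_entropy P \<gamma> \<pi> \<rho> \<and> disc_entropy P \<gamma> \<pi> \<rho> \<le> ln (real CARD('a)) / (1 - \<gamma>)"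
proof -
  have per_state: "0 \<le> (\<Sum>a\<in>UNIV. - (\<pi> s a * ln (\<pi> s a)))
      \<and> (\<Sum>a\<in>UNIV. - (\<pi> s a * ln (\<pi> s a))) \<le> ln (real CARD('a))" for s
    using assms by (intro entropy_bounds) (auto simp: is_policy_def)
  show ?thesis
    using discounted_state_sum_bounds[OF assms(1-5) per_state] unfolding disc_entropy_def by simp
qed

lemma is_policy_softmax: "is_policy (softmax \<theta>)"
  unfolding is_policy_def is_dist_def
proof (intro allI conjI)
  fix s a
  have pos: "0 < (\<Sum>a'\<in>UNIV. exp (\<theta> s a'))"
    by (intro sum_pos) auto
  then show "0 \<le> softmax \<theta> s a"
    unfolding softmax_def by simp
  have "(\<Sum>a\<in>UNIV. softmax \<theta> s a) = (\<Sum>a\<in>UNIV. exp (\<theta> s a)) / (\<Sum>a'\<in>UNIV. exp (\<theta> s a'))"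
    unfolding softmax_def by (rule sum_divide_distrib[symmetric])
  also have "\<dots> = 1"
    using pos by simp
  finally show "(\<Sum>a\<in>UNIV. softmax \<theta> s a) = 1" .
qed

lemma reg_value_mono:
  assumes "is_kernel P" and "is_policy \<pi>" and "is_dist \<rho>" and "0 \<le> \<gamma>" and "\<gamma> < 1"
    and "\<tau>' \<le> \<tau>"
  shows "reg_value P r \<gamma> \<tau>' \<pi> \<rho> \<le> reg_value P r \<gamma> \<tau> \<pi> \<rho>"
  using disc_entropy_bounds[OF assms(1-5)] assms(6)
  unfolding reg_value_def by (simp add: mult_right_mono)

lemma bdd_above_reg_value:
  fixes P :: "'s::finite \<Rightarrow> 'a::finite \<Rightarrow> 's \<Rightarrow> real"
  assumes "is_kernel P" and "is_dist \<rho>" and "0 \<le> \<gamma>" and "\<gamma> < 1" and "0 \<le> \<tau>"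
    and "\<And>s a. 0 \<le> r s a \<and> r s a \<le> 1"
  shows "bdd_above ((\<lambda>\<pi>. reg_value P r \<gamma> \<tau> \<pi> \<rho>) ` {\<pi>. is_policy \<pi>})"
proof (rule bdd_aboveI2)
  fix \<pi> :: "'s \<Rightarrow> 'a \<Rightarrow> real"
  assume "\<pi> \<in> {\<pi>. is_policy \<pi>}"
  then have "is_policy \<pi>" by simp
  have "value_fn P r \<gamma> \<pi> \<rho> \<le> 1 / (1 - \<gamma>)"
    using value_fn_le \<open>is_policy \<pi>\<close> assms by blast
  moreover have "\<tau> * disc_entropy P \<gamma> \<pi> \<rho> \<le> \<tau> * (ln (real CARD('a)) / (1 - \<gamma>))"
    using disc_entropy_bounds \<open>is_policy \<pi>\<close> assms by (blast intro: mult_left_mono)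
  ultimately show "reg_value P r \<gamma> \<tau> \<pi> \<rho> \<le> 1 / (1 - \<gamma>) + \<tau> * (ln (real CARD('a)) / (1 - \<gamma>))"
    unfolding reg_value_def by linarith
qed

lemma opt_reg_value_mono:
  fixes P :: "'s::finite \<Rightarrow> 'a::finite \<Rightarrow> 's \<Rightarrow> real"
  assumes "is_kernel P" and "is_dist \<rho>" and "0 \<le> \<gamma>" and "\<gamma> < 1" and "\<tau>' \<le> \<tau>" and "0 \<le> \<tau>"
    and "\<And>s a. 0 \<le> r s a \<and> r s a \<le> 1"
  shows "opt_reg_value P r \<gamma> \<tau>' \<rho> \<le> opt_reg_value P r \<gamma> \<tau> \<rho>"
  unfolding opt_reg_value_def
proof (rule cSUP_mono)
  show "{\<pi>. is_policy \<pi>} \<noteq> {}"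
    using is_policy_softmax by blast
  show "bdd_above ((\<lambda>\<pi>. reg_value P r \<gamma> \<tau> \<pi> \<rho>) ` {\<pi>. is_policy \<pi>})"
    using bdd_above_reg_value[OF assms(1-4,6,7)] .
  fix \<pi> :: "'s \<Rightarrow> 'a \<Rightarrow> real"
  assume "\<pi> \<in> {\<pi>. is_policy \<pi>}"
  then show "\<exists>\<pi>'\<in>{\<pi>. is_policy \<pi>}. reg_value P r \<gamma> \<tau>' \<pi> \<rho> \<le> reg_value P r \<gamma> \<tau> \<pi>' \<rho>"
    using reg_value_mono assms by blast
qed

lemma opt_reg_gap_mono:
  fixes P :: "'s::finite \<Rightarrow> 'a::finite \<Rightarrow> 's \<Rightarrow> real"
  assumes "is_kernel P" and "is_policy \<pi>" and "is_dist \<rho>" and "0 \<le> \<gamma>" and "\<gamma> < 1"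
    and "\<tau>' \<le> \<tau>" and "0 \<le> \<tau>" and "\<And>s a. 0 \<le> r s a \<and> r s a \<le> 1"
  shows "opt_reg_value P r \<gamma> \<tau>' \<rho> - reg_value P r \<gamma> \<tau>' \<pi> \<rho>
    \<le> opt_reg_value P r \<gamma> \<tau> \<rho> - reg_value P r \<gamma> \<tau> \<pi> \<rho>
      + (\<tau> - \<tau>') * ln (real CARD('a)) / (1 - \<gamma>)"
proof -
  have "reg_value P r \<gamma> \<tau> \<pi> \<rho> - reg_value P r \<gamma> \<tau>' \<pi> \<rho> = (\<tau> - \<tau>') * disc_entropy P \<gamma> \<pi> \<rho>"
    unfolding reg_value_def by (simp add: algebra_simps)
  also have "\<dots> \<le> (\<tau> - \<tau>') * (ln (real CARD('a)) / (1 - \<gamma>))"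
    using disc_entropy_bounds[OF assms(1-5)] assms(6) by (intro mult_left_mono) auto
  finally show ?thesis
    using opt_reg_value_mono[of P \<rho> \<gamma> \<tau>' \<tau> r] assms by simp
qed

theorem lemma20:
  fixes P :: "'s::finite \<Rightarrow> 'a::finite \<Rightarrow> 's \<Rightarrow> real"
    and r :: "'s \<Rightarrow> 'a \<Rightarrow> real"
    and \<rho> :: "'s \<Rightarrow> real"
    and \<theta> :: "'s \<Rightarrow> 'a \<Rightarrow> real"
    and \<gamma> \<tau>\<^sub>1 \<tau>\<^sub>2 :: real
  assumes "is_kernel P"
    and "\<And>s a. 0 \<le> r s a \<and> r s a \<le> 1"
    and "is_dist \<rho>"
    and "0 \<le> \<gamma>" and "\<gamma> < 1"
    and "0 < \<tau>\<^sub>2" and "\<tau>\<^sub>2 < \<tau>\<^sub>1"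
  shows "opt_reg_value P r \<gamma> \<tau>\<^sub>2 \<rho> - reg_value P r \<gamma> \<tau>\<^sub>2 (softmax \<theta>) \<rho>
       \<le> opt_reg_value P r \<gamma> \<tau>\<^sub>1 \<rho> - reg_value P r \<gamma> \<tau>\<^sub>1 (softmax \<theta>) \<rho>
         + 2 * \<tau>\<^sub>1 * ln (real CARD('a)) / (1 - \<gamma>)"
proof -
  have "(\<tau>\<^sub>1 - \<tau>\<^sub>2) * ln (real CARD('a)) \<le> 2 * \<tau>\<^sub>1 * ln (real CARD('a))"
    using assms(6,7) by (intro mult_right_mono) auto
  then have "(\<tau>\<^sub>1 - \<tau>\<^sub>2) * ln (real CARD('a)) / (1 - \<gamma>) \<le> 2 * \<tau>\<^sub>1 * ln (real CARD('a)) / (1 - \<gamma>)"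
    using assms(5) by (simp add: divide_right_mono)
  moreover have "opt_reg_value P r \<gamma> \<tau>\<^sub>2 \<rho> - reg_value P r \<gamma> \<tau>\<^sub>2 (softmax \<theta>) \<rho>
      \<le> opt_reg_value P r \<gamma> \<tau>\<^sub>1 \<rho> - reg_value P r \<gamma> \<tau>\<^sub>1 (softmax \<theta>) \<rho>
        + (\<tau>\<^sub>1 - \<tau>\<^sub>2) * ln (real CARD('a)) / (1 - \<gamma>)"
    using assms by (intro opt_reg_gap_mono is_policy_softmax) auto
  ultimately show ?thesis by linarith
qed

end
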